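(* The class $\mathrm{Age}(C_3[I_\omega]^* )$ has the expansion property relative to $\mathrm{Age}(C_3[I_\omega])$, where $C_3[I_\omega]$ is the reduct of $C_3[I_\omega]^*$ to $\{E\}$.
   Context: Expansion property: let $L\subseteq L^*$ be relational languages, $\mathcal K$ a class of finite $L$-structures and $\mathcal K^*$ a class of finite $L^*$-structures whose $L$-reducts lie in $\mathcal K$. $\mathcal K^*$ has the expansion property relative to $\mathcal K$ if for every $\mathbf A\in\mathcal K$ there is $\mathbf B\in\mathcal K$ such that for all $\mathbf A^*,\mathbf B^*\in\mathcal K^*$ whose $L$-reducts are $\mathbf A$ and $\mathbf B$ respectively, $\mathbf A^*$ embeds into $\mathbf B^*$. The age of a structure is the class of finite structures embeddable in it. $C_3$ is the directed 3-cycle on $[3]=\{0,1,2\}$ with edges $(0,1),(1,2),(2,0)$. Fix a linear order $\prec$ on $\mathbb N$ with $(\mathbb N,\prec)\cong(\mathbb Q,<)$. $C_3[I_\omega]^*$ is the structure with universe $[3]\times\mathbb N$ in the language $\{E,P_0,P_1,P_2,<\}$ where $E((i,a),(j,b))$ iff $(i,j)$ is an edge of $C_3$; $P_i=\{i\}\times\mathbb N$; and $(i,a)<(j,b)$ iff $i<j$, or $i=j$ and $a\prec b$. *)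

theory Defs
  imports Main "HOL.Rat"
begin

text \<open>An L-structure: a universe and a binary relation E (only its restriction to the
universe is relevant).\<close>
record 'a lstr =
  univ :: "'a set"
  edge :: "'a \<Rightarrow> 'a \<Rightarrow> bool"

record 'a sstr =
  suniv :: "'a set"
  sedge :: "'a \<Rightarrow> 'a \<Rightarrow> bool"
  sp0 :: "'a \<Rightarrow> bool"
  sp1 :: "'a \<Rightarrow> bool"
  sp2 :: "'a \<Rightarrow> bool"
  sless :: "'a \<Rightarrow> 'a \<Rightarrow> bool"

definition emb_L :: "'a lstr \<Rightarrow> 'b lstr \<Rightarrow> ('a \<Rightarrow> 'b) \<Rightarrow> bool" where
  "emb_L A M f \<longleftrightarrow> inj_on f (univ A) \<and> f ` univ A \<subseteq> univ M \<and>
     (\<forall>x\<in>univ A. \<forall>y\<in>univ A. edge M (f x) (f y) \<longleftrightarrow> edge A x y)"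

definition emb_S :: "'a sstr \<Rightarrow> 'b sstr \<Rightarrow> ('a \<Rightarrow> 'b) \<Rightarrow> bool" where
  "emb_S A M f \<longleftrightarrow> inj_on f (suniv A) \<and> f ` suniv A \<subseteq> suniv M \<and>
     (\<forall>x\<in>suniv A. \<forall>y\<in>suniv A. sedge M (f x) (f y) \<longleftrightarrow> sedge A x y) \<and>
     (\<forall>x\<in>suniv A. sp0 M (f x) \<longleftrightarrow> sp0 A x) \<and>
     (\<forall>x\<in>suniv A. sp1 M (f x) \<longleftrightarrow> sp1 A x) \<and>
     (\<forall>x\<in>suniv A. sp2 M (f x) \<longleftrightarrow> sp2 A x) \<and>
     (\<forall>x\<in>suniv A. \<forall>y\<in>suniv A. sless M (f x) (f y) \<longleftrightarrow> sless A x y)"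

definition reduct :: "'a sstr \<Rightarrow> 'a lstr" where
  "reduct A = \<lparr>univ = suniv A, edge = sedge A\<rparr>"

definition is_reduct :: "'a sstr \<Rightarrow> 'a lstr \<Rightarrow> bool" where
  "is_reduct As A \<longleftrightarrow> suniv As = univ A \<and>
     (\<forall>x\<in>univ A. \<forall>y\<in>univ A. sedge As x y \<longleftrightarrow> edge A x y)"

text \<open>Ages. Every finite structure is isomorphic to one whose universe is a finite set of
naturals, so (up to isomorphism) the age is represented by finite structures on nat.\<close>
definition age_L :: "'b lstr \<Rightarrow> nat lstr set" where
  "age_L M = {A. finite (univ A) \<and> (\<exists>f. emb_L A M f)}"

definition age_S :: "'b sstr \<Rightarrow> nat sstr set" where
  "age_S M = {A. finite (suniv A) \<and> (\<exists>f. emb_S A M f)}"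

definition expansion_property :: "nat sstr set \<Rightarrow> nat lstr set \<Rightarrow> bool" where
  "expansion_property Ks K \<longleftrightarrow>
     (\<forall>A\<in>K. \<exists>B\<in>K. \<forall>As\<in>Ks. \<forall>Bs\<in>Ks.
        is_reduct As A \<longrightarrow> is_reduct Bs B \<longrightarrow> (\<exists>f. emb_S As Bs f))"

definition C3_edge :: "nat \<Rightarrow> nat \<Rightarrow> bool" where
  "C3_edge i j \<longleftrightarrow> (i, j) \<in> {(0,1), (1,2), (2,0)}"

text \<open>Universe [3] x N, with prec a linear order on N of type (Q,<).\<close>
definition C3I_star :: "(nat \<Rightarrow> nat \<Rightarrow> bool) \<Rightarrow> (nat \<times> nat) sstr" where
  "C3I_star prec = \<lparr>suniv = {p. fst p < 3},
     sedge = (\<lambda>(i,a) (j,b). C3_edge i j),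
     sp0 = (\<lambda>(i,a). i = 0),
     sp1 = (\<lambda>(i,a). i = 1),
     sp2 = (\<lambda>(i,a). i = 2),
     sless = (\<lambda>(i,a) (j,b). i < j \<or> (i = j \<and> prec a b))\<rparr>"

definition C3I :: "(nat \<Rightarrow> nat \<Rightarrow> bool) \<Rightarrow> (nat \<times> nat) lstr" where
  "C3I prec = reduct (C3I_star prec)"

end

theory Submission
  imports Defs "HOL-Library.Product_Lexorder"
begin

text \<open>A finite substructure of \<open>C\<^sub>3[I\<^sub>\<omega>]\<^sup>*\<close> is determined, up to isomorphism, by the colours
  (the first coordinates) of its points and the order type of each colour class; so one such
  structure embeds into another as soon as every colour class of the first is at most as large
  as the corresponding class of the second. For \<open>\<^bold>A\<close> with \<open>n\<close> points take \<open>\<^bold>B = C\<^sub>3[I\<^sub>n]\<close>: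
  in any expansion of \<open>\<^bold>B\<close>, two points have the same colour iff neither is joined to the other,
  so the colour is constant on each of the three blocks and distinct on distinct blocks. Hence
  every colour class of every expansion of \<open>\<^bold>B\<close> contains a whole block of size \<open>n\<close>.\<close>

lemma finite_strict_mono_into:
  fixes S T :: "'a::linorder set"
  assumes "finite S" "finite T" "card S \<le> card T"
  shows "\<exists>\<phi>. \<phi> ` S \<subseteq> T \<and> strict_mono_on S \<phi>"
proof -
  define ys where "ys = sorted_list_of_set T"
  define rank where "rank u = card {w\<in>S. w < u}" for u
  have len: "length ys = card T" by (simp add: ys_def)
  have set_ys: "set ys = T" using assms(2) by (simp add: ys_def)
  have rank_less: "rank u < length ys" if "u \<in> S" for u
  proof -
    have "{w\<in>S. w < u} \<subset> S" using that by auto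
    then have "rank u < card S" unfolding rank_def by (rule psubset_card_mono[OF assms(1)])
    then show ?thesis using assms(3) len by simp
  qed
  have rank_mono: "strict_mono_on S rank"
  proof (rule strict_mono_onI)
    fix u v assume "u \<in> S" "v \<in> S" "u < v"
    then have "{w\<in>S. w < u} \<subset> {w\<in>S. w < v}" by auto
    then show "rank u < rank v"
      unfolding rank_def using assms(1) by (simp add: psubset_card_mono)
  qed
  have "(\<lambda>u. ys ! rank u) ` S \<subseteq> T"
    using rank_less nth_mem unfolding set_ys[symmetric] by blast
  moreover have "strict_mono_on S (\<lambda>u. ys ! rank u)"
  proof (rule strict_mono_onI)
    fix u v assume "u \<in> S" "v \<in> S" "u < v"
    then show "ys ! rank u < ys ! rank v"
      using rank_less strict_mono_onD[OF rank_mono] sorted_wrt_nth_less[of "(<)" ys]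
      by (simp add: ys_def)
  qed
  ultimately show ?thesis by blast
qed

text \<open>Here \<open><\<close> on pairs is the lexicographic order.\<close>

lemma finite_fibrewise_strict_mono_into:
  fixes S T :: "('a::linorder \<times> 'b::linorder) set"
  assumes "finite S" "finite T"
    and "\<And>p. card {s\<in>S. fst s = p} \<le> card {t\<in>T. fst t = p}"
  obtains \<phi> where "\<phi> ` S \<subseteq> T" "\<And>s. s \<in> S \<Longrightarrow> fst (\<phi> s) = fst s" "strict_mono_on S \<phi>"
proof -
  have fibre: "\<exists>\<phi>. \<phi> ` {s\<in>S. fst s = p} \<subseteq> {t\<in>T. fst t = p} \<and> strict_mono_on {s\<in>S. fst s = p} \<phi>"
    for p
  proof -
    have "finite {s\<in>S. fst s = p}" "finite {t\<in>T. fst t = p}" using assms(1,2) by simp_all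
    then show ?thesis using assms(3) by (rule finite_strict_mono_into)
  qed
  from choice[OF allI[OF fibre]] obtain \<Phi> where "\<forall>p. \<Phi> p ` {s\<in>S. fst s = p} \<subseteq> {t\<in>T. fst t = p} \<and>
      strict_mono_on {s\<in>S. fst s = p} (\<Phi> p)"
    ..
  then have \<Phi>: "\<And>p. \<Phi> p ` {s\<in>S. fst s = p} \<subseteq> {t\<in>T. fst t = p}"
      "\<And>p. strict_mono_on {s\<in>S. fst s = p} (\<Phi> p)"
    by simp_all
  show thesis
  proof
    show "(\<lambda>s. \<Phi> (fst s) s) ` S \<subseteq> T" using \<Phi>(1) by blast
    show fst: "fst (\<Phi> (fst s) s) = fst s" if "s \<in> S" for s
      using \<Phi>(1)[of "fst s"] that by blast
    show "strict_mono_on S (\<lambda>s. \<Phi> (fst s) s)"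
    proof (rule strict_mono_onI)
      fix s s' assume s: "s \<in> S" "s' \<in> S" "s < s'"
      show "\<Phi> (fst s) s < \<Phi> (fst s') s'"
      proof (cases "fst s = fst s'")
        case True
        then show ?thesis using s strict_mono_onD[OF \<Phi>(2)[of "fst s"], of s s'] by simp
      next
        case False
        then have "fst s < fst s'" using s(3) by (simp add: less_prod_def')
        then show ?thesis using fst s by (simp add: less_prod_def')
      qed
    qed
  qed
qed

lemma C3_edge_either_iff:
  assumes "i < 3" "j < 3"
  shows "C3_edge i j \<or> C3_edge j i \<longleftrightarrow> i \<noteq> j"
  using assms unfolding C3_edge_def by (cases i; cases j) (auto simp: numeral_eq_Suc)

lemma emb_C3I_star_colour_lt:
  assumes "emb_S X (C3I_star prec) g" "x \<in> suniv X"
  shows "fst (g x) < 3"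
  using assms by (auto simp: emb_S_def C3I_star_def)

text \<open>Points are coded by their colour and the image of their second coordinate under
  an order embedding \<open>h\<close>, so that \<open><\<close> becomes the lexicographic order.\<close>

definition C3_coord :: "(nat \<Rightarrow> 'c) \<Rightarrow> ('a \<Rightarrow> nat \<times> nat) \<Rightarrow> 'a \<Rightarrow> nat \<times> 'c" where
  "C3_coord h f x = (fst (f x), h (snd (f x)))"

locale prec_order_embedding =
  fixes prec :: "nat \<Rightarrow> nat \<Rightarrow> bool" and h :: "nat \<Rightarrow> 'c::linorder"
  assumes inj_h: "inj h" and prec_iff: "\<And>a b. prec a b \<longleftrightarrow> h a < h b"
begin

lemma emb_C3I_star_coord:
  assumes f: "emb_S X (C3I_star prec) f" and x: "x \<in> suniv X" and y: "y \<in> suniv X"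
  shows "sedge X x y \<longleftrightarrow> C3_edge (fst (C3_coord h f x)) (fst (C3_coord h f y))"
    and "sp0 X x \<longleftrightarrow> fst (C3_coord h f x) = 0"
    and "sp1 X x \<longleftrightarrow> fst (C3_coord h f x) = 1"
    and "sp2 X x \<longleftrightarrow> fst (C3_coord h f x) = 2"
    and "sless X x y \<longleftrightarrow> C3_coord h f x < C3_coord h f y"
  using assms
  by (auto simp: emb_S_def C3I_star_def C3_coord_def split_beta prec_iff less_prod_def')

lemma inj_on_C3_coord:
  assumes "emb_S X (C3I_star prec) f"
  shows "inj_on (C3_coord h f) (suniv X)"
proof (rule inj_onI)
  fix x y assume "x \<in> suniv X" "y \<in> suniv X" "C3_coord h f x = C3_coord h f y"
  moreover have "f x = f y \<Longrightarrow> x = y"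
    using assms \<open>x \<in> suniv X\<close> \<open>y \<in> suniv X\<close> by (auto simp: emb_S_def dest: inj_onD)
  ultimately show "x = y"
    using inj_h by (auto simp: C3_coord_def prod_eq_iff dest: injD)
qed

lemma emb_S_if_C3_coord_strict_mono:
  assumes f: "emb_S X (C3I_star prec) f" and g: "emb_S Y (C3I_star prec) g"
    and into: "\<psi> ` suniv X \<subseteq> suniv Y"
    and colour: "\<And>x. x \<in> suniv X \<Longrightarrow> fst (C3_coord h g (\<psi> x)) = fst (C3_coord h f x)"
    and mono: "\<And>x y. x \<in> suniv X \<Longrightarrow> y \<in> suniv X \<Longrightarrow>
                 C3_coord h g (\<psi> x) < C3_coord h g (\<psi> y) \<longleftrightarrow> C3_coord h f x < C3_coord h f y"
  shows "emb_S X Y \<psi>"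
  unfolding emb_S_def
proof (intro conjI ballI)
  show "inj_on \<psi> (suniv X)"
  proof (rule inj_onI)
    fix x y assume "x \<in> suniv X" "y \<in> suniv X" "\<psi> x = \<psi> y"
    then have "C3_coord h f x = C3_coord h f y"
      using mono[of x y] mono[of y x] by (metis linorder_neqE less_irrefl)
    then show "x = y"
      using inj_on_C3_coord[OF f] \<open>x \<in> suniv X\<close> \<open>y \<in> suniv X\<close> by (auto dest: inj_onD)
  qed
  show "\<psi> ` suniv X \<subseteq> suniv Y" by (fact into)
next
  fix x y assume xy: "x \<in> suniv X" "y \<in> suniv X"
  then have "\<psi> x \<in> suniv Y" "\<psi> y \<in> suniv Y" using into by auto
  note coord = emb_C3I_star_coord[OF g this] emb_C3I_star_coord[OF f xy]
  show "sedge Y (\<psi> x) (\<psi> y) \<longleftrightarrow> sedge X x y"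
    using coord colour xy by simp
  show "sless Y (\<psi> x) (\<psi> y) \<longleftrightarrow> sless X x y"
    using coord mono xy by simp
next
  fix x assume x: "x \<in> suniv X"
  then have "\<psi> x \<in> suniv Y" using into by auto
  note coord = emb_C3I_star_coord[OF g this this] emb_C3I_star_coord[OF f x x]
  show "sp0 Y (\<psi> x) \<longleftrightarrow> sp0 X x" "sp1 Y (\<psi> x) \<longleftrightarrow> sp1 X x" "sp2 Y (\<psi> x) \<longleftrightarrow> sp2 X x"
    using coord colour x by simp_all
qed

lemma emb_S_if_colour_classes_le:
  assumes f: "emb_S X (C3I_star prec) f" and g: "emb_S Y (C3I_star prec) g"
    and fin: "finite (suniv X)" "finite (suniv Y)"
    and le: "\<And>p. p < 3 \<Longrightarrow>
               card {x\<in>suniv X. fst (f x) = p} \<le> card {y\<in>suniv Y. fst (g y) = p}"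
  obtains \<psi> where "emb_S X Y \<psi>"
proof -
  let ?S = "C3_coord h f ` suniv X" and ?T = "C3_coord h g ` suniv Y"
  have fibre_card: "card {s\<in>C3_coord h k ` suniv Z. fst s = p} = card {z\<in>suniv Z. fst (k z) = p}"
    if "emb_S Z (C3I_star prec) k" for Z k p
  proof -
    have "{s\<in>C3_coord h k ` suniv Z. fst s = p} = C3_coord h k ` {z\<in>suniv Z. fst (k z) = p}"
      by (auto simp: C3_coord_def)
    then show ?thesis
      using inj_on_C3_coord[OF that] by (simp add: card_image inj_on_subset)
  qed
  have fibres_le: "card {s\<in>?S. fst s = p} \<le> card {t\<in>?T. fst t = p}" for p
  proof (cases "p < 3")
    case True
    then show ?thesis using le[OF True] fibre_card[OF f, of p] fibre_card[OF g, of p] by simp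
  next
    case False
    then have empty: "{s\<in>?S. fst s = p} = {}"
      using emb_C3I_star_colour_lt[OF f] by (fastforce simp: C3_coord_def)
    show ?thesis unfolding empty by simp
  qed
  have "finite ?S" "finite ?T" using fin by simp_all
  then obtain \<phi> where \<phi>: "\<phi> ` ?S \<subseteq> ?T" "\<And>s. s \<in> ?S \<Longrightarrow> fst (\<phi> s) = fst s"
      "strict_mono_on ?S \<phi>"
    using fibres_le by (rule finite_fibrewise_strict_mono_into) (rule that)
  define \<psi> where "\<psi> = inv_into (suniv Y) (C3_coord h g) \<circ> \<phi> \<circ> C3_coord h f"
  have \<psi>: "\<psi> x \<in> suniv Y" "C3_coord h g (\<psi> x) = \<phi> (C3_coord h f x)" if "x \<in> suniv X" for x
  proof -
    have "\<phi> (C3_coord h f x) \<in> ?T" using \<phi>(1) that by blast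
    then show "\<psi> x \<in> suniv Y" "C3_coord h g (\<psi> x) = \<phi> (C3_coord h f x)"
      by (simp_all add: \<psi>_def inv_into_into f_inv_into_f)
  qed
  show thesis
  proof (rule that, rule emb_S_if_C3_coord_strict_mono[OF f g])
    show "\<psi> ` suniv X \<subseteq> suniv Y" using \<psi>(1) by blast
    show "fst (C3_coord h g (\<psi> x)) = fst (C3_coord h f x)" if "x \<in> suniv X" for x
      using \<psi>(2)[OF that] \<phi>(2) that by simp
    show "C3_coord h g (\<psi> x) < C3_coord h g (\<psi> y) \<longleftrightarrow> C3_coord h f x < C3_coord h f y"
      if "x \<in> suniv X" "y \<in> suniv X" for x y
      using \<psi>(2) that strict_mono_on_less[OF \<phi>(3)] by simp
  qed
qed

end

text \<open>\<open>C\<^sub>3[I\<^sub>m]\<close> on \<open>{0..<3m}\<close>: the point \<open>x\<close> lies in block \<open>x div m\<close>.\<close>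

definition C3_blowup :: "nat \<Rightarrow> nat lstr" where
  "C3_blowup m = \<lparr>univ = {0..<3 * m}, edge = (\<lambda>x y. C3_edge (x div m) (y div m))\<rparr>"

lemma C3_blowup_in_age: "C3_blowup m \<in> age_L (C3I prec)"
proof -
  have "inj_on (\<lambda>x. (x div m, x mod m)) (univ (C3_blowup m))"
    by (rule inj_onI) (metis div_mult_mod_eq prod.inject)
  moreover have "x div m < 3" if "x < 3 * m" for x
    using that by (simp add: less_mult_imp_div_less)
  ultimately have "emb_L (C3_blowup m) (C3I prec) (\<lambda>x. (x div m, x mod m))"
    unfolding emb_L_def C3I_def reduct_def C3I_star_def C3_blowup_def by auto
  then show ?thesis unfolding age_L_def C3_blowup_def by auto
qed

lemma C3I_star_colour_eq_iff:
  assumes "emb_S X (C3I_star prec) g" "x \<in> suniv X" "y \<in> suniv X"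
  shows "fst (g x) = fst (g y) \<longleftrightarrow> \<not> sedge X x y \<and> \<not> sedge X y x"
  using assms C3_edge_either_iff[of "fst (g x)" "fst (g y)"]
  by (auto simp: emb_S_def C3I_star_def split_beta)

lemma C3_blowup_expansion_colour_class:
  assumes red: "is_reduct Y (C3_blowup m)" and g: "emb_S Y (C3I_star prec) g" and "p < 3"
  shows "m \<le> card {y\<in>suniv Y. fst (g y) = p}"
proof (cases "m = 0")
  case False
  have U: "suniv Y = {0..<3 * m}" using red by (simp add: is_reduct_def C3_blowup_def)
  have block: "x div m < 3" if "x < 3 * m" for x
    using that by (simp add: less_mult_imp_div_less)
  have colour_eq: "fst (g x) = fst (g y) \<longleftrightarrow> x div m = y div m"
    if "x < 3 * m" "y < 3 * m" for x y
    using C3I_star_colour_eq_iff[OF g, of x y] C3_edge_either_iff[OF block block, OF that]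
      red that U by (auto simp: is_reduct_def C3_blowup_def)
  have start: "k * m \<in> suniv Y" if "k < 3" for k
    using that False U by simp
  have "inj_on (\<lambda>k. fst (g (k * m))) {0..<3}"
  proof (rule inj_onI)
    fix k l assume "k \<in> {0..<3}" "l \<in> {0..<3}" "fst (g (k * m)) = fst (g (l * m))"
    then show "k = l" using colour_eq start U False by simp
  qed
  moreover have "(\<lambda>k. fst (g (k * m))) ` {0..<3} \<subseteq> {0..<3}"
    using emb_C3I_star_colour_lt[OF g] start by auto
  ultimately have "(\<lambda>k. fst (g (k * m))) ` {0..<3} = {0..<3}"
    by (simp add: card_image card_subset_eq)
  then have "p \<in> (\<lambda>k. fst (g (k * m))) ` {0..<3}" using \<open>p < 3\<close> by simp
  then obtain k where k: "k < 3" "fst (g (k * m)) = p" by auto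
  have "{k * m..<k * m + m} \<subseteq> {y\<in>suniv Y. fst (g y) = p}"
  proof
    fix y assume y: "y \<in> {k * m..<k * m + m}"
    then have "y div m = k" by (intro div_nat_eqI) (auto simp: mult.commute)
    moreover have "y < 3 * m"
      using \<open>y div m = k\<close> k(1) div_less_iff_less_mult[of m y 3] False by simp
    ultimately show "y \<in> {y\<in>suniv Y. fst (g y) = p}"
      using colour_eq[of y "k * m"] k False U by simp
  qed
  moreover have "finite {y\<in>suniv Y. fst (g y) = p}" using U by simp
  ultimately have "card {k * m..<k * m + m} \<le> card {y\<in>suniv Y. fst (g y) = p}"
    by (rule card_mono[rotated])
  then show ?thesis by simp
qed simp

theorem theorem5p6:
  fixes prec :: "nat \<Rightarrow> nat \<Rightarrow> bool"
  assumes "\<exists>h :: nat \<Rightarrow> rat. bij h \<and> (\<forall>a b. prec a b \<longleftrightarrow> h a < h b)"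
  shows "expansion_property (age_S (C3I_star prec)) (age_L (C3I prec))"
  unfolding expansion_property_def
proof
  obtain h :: "nat \<Rightarrow> rat" where "inj h" "\<And>a b. prec a b \<longleftrightarrow> h a < h b"
    using assms bij_is_inj by blast
  then interpret prec_order_embedding prec h by unfold_locales
  fix A :: "nat lstr"
  let ?B = "C3_blowup (card (univ A))"
  show "\<exists>B\<in>age_L (C3I prec). \<forall>As\<in>age_S (C3I_star prec). \<forall>Bs\<in>age_S (C3I_star prec).
          is_reduct As A \<longrightarrow> is_reduct Bs B \<longrightarrow> (\<exists>\<psi>. emb_S As Bs \<psi>)"
  proof (rule bexI[of _ ?B], intro ballI impI)
    fix As Bs
    assume "As \<in> age_S (C3I_star prec)" "Bs \<in> age_S (C3I_star prec)"
      and "is_reduct As A" "is_reduct Bs ?B"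
    then obtain f g where f: "emb_S As (C3I_star prec) f" and g: "emb_S Bs (C3I_star prec) g"
      and fin: "finite (suniv As)" "finite (suniv Bs)" and card_As: "card (suniv As) = card (univ A)"
      by (auto simp: age_S_def is_reduct_def)
    have "card {x\<in>suniv As. fst (f x) = p} \<le> card {y\<in>suniv Bs. fst (g y) = p}"
      if "p < 3" for p
    proof -
      have "card {x\<in>suniv As. fst (f x) = p} \<le> card (suniv As)"
        using fin by (simp add: card_mono)
      also have "\<dots> \<le> card {y\<in>suniv Bs. fst (g y) = p}"
        unfolding card_As by (rule C3_blowup_expansion_colour_class[OF \<open>is_reduct Bs ?B\<close> g that])
      finally show ?thesis .
    qed
    then obtain \<psi> where "emb_S As Bs \<psi>" by (rule emb_S_if_colour_classes_le[OF f g fin])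
    then show "\<exists>\<psi>. emb_S As Bs \<psi>" by (rule exI[of _ \<psi>])
  qed (fact C3_blowup_in_age)
qed

end
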